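(* Let $\mathbb{E}$ be a finitely complete category, $\Sigma$ a point-congruous class of split epimorphisms, and suppose $\mathbb{E}$ is a $\Sigma$-Mal'tsev category. Let $f\colon X\to Y$ and $g\colon Y\to Z$ be morphisms. If $g\circ f$ and $g$ are $\Sigma$-special, then $f$ is $\Sigma$-special.
   Context: A split epimorphism is a pair $(f,s)$ with $fs=1$. A class $\Sigma$ of split epimorphisms is fibrational if it contains all split epimorphisms $(f,s)$ with $f$ invertible and is stable under pullback along any morphism; it is point-congruous if moreover the full subcategory $\Sigma(\mathbb{E})$ of the category $\mathrm{Pt}(\mathbb{E})$ of split epimorphisms (with commuting squares as morphisms) is closed under finite limits in $\mathrm{Pt}(\mathbb{E})$. A pair of morphisms with common codomain $W$ is jointly extremally epic if it factors jointly through no non-invertible monomorphism into $W$. $\mathbb{E}$ is $\Sigma$-Mal'tsev if for every split epimorphism $(f,s)\colon X\rightleftarrows Y$ in $\Sigma$ and every split epimorphism $(g,t)$ with $g\colon Y'\to Y$, letting $X'=Y'\times_YX$, $s'=(1_{Y'},sg)$, $\bar t=(tf,1_X)$, the pair $(s',\bar t)$ is jointly extremally epic. A $\Sigma$-relation is a reflexive relation $(d_0,d_1)\colon S\rightarrowtail X\times X$ with reflexivity $s_0$ such that $(d_0,s_0)\in\Sigma$. A morphism $f$ is $\Sigma$-special when its kernel relation $R[f]$ is a $\Sigma$-relation. *)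

theory Defs
  imports Main
begin

record ('o,'m) cat =
  Obj :: "'o set"
  Arr :: "'m set"
  Dom :: "'m \<Rightarrow> 'o"
  Cod :: "'m \<Rightarrow> 'o"
  Idt :: "'o \<Rightarrow> 'm"
  Cmp :: "'m \<Rightarrow> 'm \<Rightarrow> 'm"   (* Cmp C g f = g o f *)

definition hom :: "('o,'m) cat \<Rightarrow> 'm \<Rightarrow> 'o \<Rightarrow> 'o \<Rightarrow> bool" where
  "hom C f X Y \<longleftrightarrow> f \<in> Arr C \<and> Dom C f = X \<and> Cod C f = Y"

definition category :: "('o,'m) cat \<Rightarrow> bool" where
  "category C \<longleftrightarrow>
     (\<forall>f\<in>Arr C. Dom C f \<in> Obj C \<and> Cod C f \<in> Obj C) \<and>
     (\<forall>X\<in>Obj C. hom C (Idt C X) X X) \<and>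
     (\<forall>f g. f \<in> Arr C \<and> g \<in> Arr C \<and> Cod C f = Dom C g
        \<longrightarrow> hom C (Cmp C g f) (Dom C f) (Cod C g)) \<and>
     (\<forall>f\<in>Arr C. Cmp C f (Idt C (Dom C f)) = f \<and> Cmp C (Idt C (Cod C f)) f = f) \<and>
     (\<forall>f g h. f \<in> Arr C \<and> g \<in> Arr C \<and> h \<in> Arr C \<and> Cod C f = Dom C g \<and> Cod C g = Dom C h
        \<longrightarrow> Cmp C h (Cmp C g f) = Cmp C (Cmp C h g) f)"

definition mono :: "('o,'m) cat \<Rightarrow> 'm \<Rightarrow> bool" where
  "mono C m \<longleftrightarrow> m \<in> Arr C \<and>
     (\<forall>a b. a \<in> Arr C \<and> b \<in> Arr C \<and> Cod C a = Dom C m \<and> Cod C b = Dom C m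
        \<and> Dom C a = Dom C b \<and> Cmp C m a = Cmp C m b \<longrightarrow> a = b)"

definition iso :: "('o,'m) cat \<Rightarrow> 'm \<Rightarrow> bool" where
  "iso C f \<longleftrightarrow> f \<in> Arr C \<and>
     (\<exists>g. hom C g (Cod C f) (Dom C f) \<and> Cmp C g f = Idt C (Dom C f)
          \<and> Cmp C f g = Idt C (Cod C f))"

definition terminal :: "('o,'m) cat \<Rightarrow> 'o \<Rightarrow> bool" where
  "terminal C T \<longleftrightarrow> T \<in> Obj C \<and> (\<forall>X\<in>Obj C. \<exists>!u. hom C u X T)"

definition pullback :: "('o,'m) cat \<Rightarrow> 'm \<Rightarrow> 'm \<Rightarrow> 'o \<Rightarrow> 'm \<Rightarrow> 'm \<Rightarrow> bool" where
  "pullback C f g P p1 p2 \<longleftrightarrow>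
     f \<in> Arr C \<and> g \<in> Arr C \<and> Cod C f = Cod C g \<and>
     hom C p1 P (Dom C f) \<and> hom C p2 P (Dom C g) \<and> Cmp C f p1 = Cmp C g p2 \<and>
     (\<forall>Q q1 q2. hom C q1 Q (Dom C f) \<and> hom C q2 Q (Dom C g) \<and> Cmp C f q1 = Cmp C g q2
        \<longrightarrow> (\<exists>!u. hom C u Q P \<and> Cmp C p1 u = q1 \<and> Cmp C p2 u = q2))"

definition finitely_complete :: "('o,'m) cat \<Rightarrow> bool" where
  "finitely_complete C \<longleftrightarrow> category C \<and> (\<exists>T. terminal C T) \<and>
     (\<forall>f g. f \<in> Arr C \<and> g \<in> Arr C \<and> Cod C f = Cod C g
        \<longrightarrow> (\<exists>P p1 p2. pullback C f g P p1 p2))"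

definition split_epi :: "('o,'m) cat \<Rightarrow> 'm \<times> 'm \<Rightarrow> bool" where
  "split_epi C p \<longleftrightarrow> (case p of (f, s) \<Rightarrow>
     f \<in> Arr C \<and> hom C s (Cod C f) (Dom C f) \<and> Cmp C f s = Idt C (Cod C f))"

text \<open>Pt(E): objects are split epis (f,s); a morphism (P,Q,(a,b)) is a commuting square
  with a between the domains and b between the codomains, commuting with both f and s.\<close>
definition Pt :: "('o,'m) cat \<Rightarrow> ('m \<times> 'm, ('m \<times> 'm) \<times> ('m \<times> 'm) \<times> ('m \<times> 'm)) cat" where
  "Pt C = \<lparr> Obj = {p. split_epi C p},
            Arr = {(P, Q, (a, b)). split_epi C P \<and> split_epi C Q \<and>
                     hom C a (Dom C (fst P)) (Dom C (fst Q)) \<and>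
                     hom C b (Cod C (fst P)) (Cod C (fst Q)) \<and>
                     Cmp C (fst Q) a = Cmp C b (fst P) \<and>
                     Cmp C a (snd P) = Cmp C (snd Q) b},
            Dom = (\<lambda>h. fst h),
            Cod = (\<lambda>h. fst (snd h)),
            Idt = (\<lambda>P. (P, P, (Idt C (Dom C (fst P)), Idt C (Cod C (fst P))))),
            Cmp = (\<lambda>k h. (fst h, fst (snd k),
                     (Cmp C (fst (snd (snd k))) (fst (snd (snd h))),
                      Cmp C (snd (snd (snd k))) (snd (snd (snd h)))))) \<rparr>"

definition fibrational :: "('o,'m) cat \<Rightarrow> ('m \<times> 'm) set \<Rightarrow> bool" where
  "fibrational C S \<longleftrightarrow>
     S \<subseteq> {p. split_epi C p} \<and>
     (\<forall>f s. split_epi C (f, s) \<and> iso C f \<longrightarrow> (f, s) \<in> S) \<and>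
     (\<forall>f s v P p1 p2 s'. (f, s) \<in> S \<and> v \<in> Arr C \<and> Cod C v = Cod C f \<and>
        pullback C v f P p1 p2 \<and> hom C s' (Dom C v) P \<and>
        Cmp C p1 s' = Idt C (Dom C v) \<and> Cmp C p2 s' = Cmp C s v
        \<longrightarrow> (p1, s') \<in> S)"

text \<open>Closure of the full subcategory S(E) of Pt(E) under finite limits in Pt(E),
  i.e. under terminal objects and pullbacks of Pt(E).\<close>
definition point_congruous :: "('o,'m) cat \<Rightarrow> ('m \<times> 'm) set \<Rightarrow> bool" where
  "point_congruous C S \<longleftrightarrow> fibrational C S \<and>
     (\<forall>T. terminal (Pt C) T \<longrightarrow> T \<in> S) \<and>
     (\<forall>\<alpha> \<beta> P \<pi>1 \<pi>2. pullback (Pt C) \<alpha> \<beta> P \<pi>1 \<pi>2 \<and>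
        Dom (Pt C) \<alpha> \<in> S \<and> Dom (Pt C) \<beta> \<in> S \<and> Cod (Pt C) \<alpha> \<in> S \<longrightarrow> P \<in> S)"

definition jointly_extremally_epic :: "('o,'m) cat \<Rightarrow> 'm \<Rightarrow> 'm \<Rightarrow> bool" where
  "jointly_extremally_epic C a b \<longleftrightarrow> a \<in> Arr C \<and> b \<in> Arr C \<and> Cod C a = Cod C b \<and>
     (\<forall>m a' b'. mono C m \<and> Cod C m = Cod C a \<and>
        hom C a' (Dom C a) (Dom C m) \<and> hom C b' (Dom C b) (Dom C m) \<and>
        Cmp C m a' = a \<and> Cmp C m b' = b \<longrightarrow> iso C m)"

text \<open>Sigma-Mal'tsev: for (f,s) : X <-> Y in S and a split epi (g,t) with g : Y' -> Y,
  with X' = Y' x_Y X (projections p1 : X' -> Y', p2 : X' -> X),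
  s' = (1, s g) : Y' -> X' and tb = (t f, 1) : X -> X', the pair (s', tb) is
  jointly extremally epic.\<close>
definition sigma_maltsev :: "('o,'m) cat \<Rightarrow> ('m \<times> 'm) set \<Rightarrow> bool" where
  "sigma_maltsev C S \<longleftrightarrow>
     (\<forall>f s g t P p1 p2 s' tb. (f, s) \<in> S \<and> split_epi C (g, t) \<and> Cod C g = Cod C f \<and>
        pullback C g f P p1 p2 \<and>
        hom C s' (Dom C g) P \<and> Cmp C p1 s' = Idt C (Dom C g) \<and> Cmp C p2 s' = Cmp C s g \<and>
        hom C tb (Dom C f) P \<and> Cmp C p1 tb = Cmp C t f \<and> Cmp C p2 tb = Idt C (Dom C f)
        \<longrightarrow> jointly_extremally_epic C s' tb)"

definition jointly_monic :: "('o,'m) cat \<Rightarrow> 'm \<Rightarrow> 'm \<Rightarrow> bool" where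
  "jointly_monic C d0 d1 \<longleftrightarrow> d0 \<in> Arr C \<and> d1 \<in> Arr C \<and> Dom C d0 = Dom C d1 \<and>
     (\<forall>a b. a \<in> Arr C \<and> b \<in> Arr C \<and> Dom C a = Dom C b \<and> Cod C a = Dom C d0 \<and>
        Cod C b = Dom C d0 \<and> Cmp C d0 a = Cmp C d0 b \<and> Cmp C d1 a = Cmp C d1 b \<longrightarrow> a = b)"

definition sigma_relation ::
    "('o,'m) cat \<Rightarrow> ('m \<times> 'm) set \<Rightarrow> 'o \<Rightarrow> 'o \<Rightarrow> 'm \<Rightarrow> 'm \<Rightarrow> 'm \<Rightarrow> bool" where
  "sigma_relation C S X R d0 d1 s0 \<longleftrightarrow>
     hom C d0 R X \<and> hom C d1 R X \<and> jointly_monic C d0 d1 \<and>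
     hom C s0 X R \<and> Cmp C d0 s0 = Idt C X \<and> Cmp C d1 s0 = Idt C X \<and> (d0, s0) \<in> S"

definition sigma_special :: "('o,'m) cat \<Rightarrow> ('m \<times> 'm) set \<Rightarrow> 'm \<Rightarrow> bool" where
  "sigma_special C S f \<longleftrightarrow> f \<in> Arr C \<and>
     (\<forall>R d0 d1 s0. pullback C f f R d0 d1 \<and> hom C s0 (Dom C f) R \<and>
        Cmp C d0 s0 = Idt C (Dom C f) \<and> Cmp C d1 s0 = Idt C (Dom C f)
        \<longrightarrow> sigma_relation C S (Dom C f) R d0 d1 s0)"

end

theory Submission
  imports Defs
begin

(* R[f], regarded as the point (d0, s0) over X, is the pullback in Pt(E) of the point R[gf] over X
   and the trivial point (1_Y, 1_Y), both mapped to the point R[g] over Y: a pair (x, x') lies in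
   R[f] exactly when it lies in R[gf] and its image (fx, fx') in R[g] is on the diagonal.
   Pullbacks in Pt(E) are computed separately on the objects of pairs and on the bases (here
   X = X x_Y Y). Since R[gf], R[g] and (1_Y, 1_Y) are in Sigma, point-congruity puts R[f] in Sigma. *)

lemma homI: "f \<in> Arr C \<Longrightarrow> hom C f (Dom C f) (Cod C f)"
  by (simp add: hom_def)

lemma pullback_homs:
  "pullback C f g P p1 p2 \<Longrightarrow>
   hom C p1 P (Dom C f) \<and> hom C p2 P (Dom C g) \<and> Cmp C f p1 = Cmp C g p2"
  by (simp add: pullback_def)

lemma pullback_factor:
  assumes "pullback C f g P p1 p2" "hom C q1 W (Dom C f)" "hom C q2 W (Dom C g)"
    and "Cmp C f q1 = Cmp C g q2"
  obtains u where "hom C u W P" "Cmp C p1 u = q1" "Cmp C p2 u = q2"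
  using assms unfolding pullback_def by blast

lemma pullback_unique_factor:
  assumes "pullback C f g P p1 p2" "hom C q1 W (Dom C f)" "hom C q2 W (Dom C g)"
    and "Cmp C f q1 = Cmp C g q2"
  shows "\<exists>!u. hom C u W P \<and> Cmp C p1 u = q1 \<and> Cmp C p2 u = q2"
  using assms unfolding pullback_def by blast

lemma jointly_monicD:
  assumes "jointly_monic C d0 d1" "hom C a W (Dom C d0)" "hom C b W (Dom C d0)"
    and "Cmp C d0 a = Cmp C d0 b" "Cmp C d1 a = Cmp C d1 b"
  shows "a = b"
  using assms unfolding jointly_monic_def hom_def by metis

lemma Pt_arr_iff:
  "((fP, sP), (fQ, sQ), (a, b)) \<in> Arr (Pt C) \<longleftrightarrow>
   split_epi C (fP, sP) \<and> split_epi C (fQ, sQ) \<and>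
   hom C a (Dom C fP) (Dom C fQ) \<and> hom C b (Cod C fP) (Cod C fQ) \<and>
   Cmp C fQ a = Cmp C b fP \<and> Cmp C a sP = Cmp C sQ b"
  unfolding Pt_def by (simp del: split_epi_def)

lemma Pt_comp: "Cmp (Pt C) (Q, R, (a', b')) (P, Q', (a, b)) = (P, R, (Cmp C a' a, Cmp C b' b))"
  by (simp add: Pt_def)

lemma Pt_hom_iff: "hom (Pt C) u P Q \<longleftrightarrow> u \<in> Arr (Pt C) \<and> fst u = P \<and> fst (snd u) = Q"
  by (simp add: hom_def Pt_def)

lemma Pt_dom: "Dom (Pt C) h = fst h" and Pt_cod: "Cod (Pt C) h = fst (snd h)"
  by (simp_all add: Pt_def)

lemma Pt_homE:
  assumes "hom (Pt C) u P Q"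
  obtains a b where "u = (P, Q, (a, b))" "(P, Q, (a, b)) \<in> Arr (Pt C)"
  using assms unfolding Pt_hom_iff by (metis prod.collapse)

definition kernel_relation :: "('o,'m) cat \<Rightarrow> 'm \<Rightarrow> 'o \<Rightarrow> 'm \<Rightarrow> 'm \<Rightarrow> 'm \<Rightarrow> bool" where
  "kernel_relation C f R d0 d1 s0 \<longleftrightarrow> pullback C f f R d0 d1 \<and> hom C s0 (Dom C f) R \<and>
     Cmp C d0 s0 = Idt C (Dom C f) \<and> Cmp C d1 s0 = Idt C (Dom C f)"

lemma kernel_relation_pullback: "kernel_relation C f R d0 d1 s0 \<Longrightarrow> pullback C f f R d0 d1"
  unfolding kernel_relation_def by blast

lemma kernel_relation_homs:
  assumes "kernel_relation C f R d0 d1 s0" "hom C f X Y"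
  shows "hom C d0 R X \<and> hom C d1 R X \<and> hom C s0 X R \<and> Cmp C f d0 = Cmp C f d1 \<and>
    Cmp C d0 s0 = Idt C X \<and> Cmp C d1 s0 = Idt C X"
  using assms unfolding kernel_relation_def pullback_def hom_def by auto

lemma kernel_relation_split_epi:
  "kernel_relation C f R d0 d1 s0 \<Longrightarrow> split_epi C (d0, s0)"
  unfolding kernel_relation_def split_epi_def pullback_def hom_def by simp

context
  fixes C :: "('o,'m) cat"
  assumes cat: "category C"
begin

lemma comp_hom: "hom C f A B \<Longrightarrow> hom C g B D \<Longrightarrow> hom C (Cmp C g f) A D"
  using cat unfolding category_def hom_def by metis

lemma hom_objs: "hom C f A B \<Longrightarrow> A \<in> Obj C \<and> B \<in> Obj C"
  using cat unfolding category_def hom_def by metis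

lemma id_hom: "A \<in> Obj C \<Longrightarrow> hom C (Idt C A) A A"
  using cat unfolding category_def by blast

lemma comp_id_right: "hom C f A B \<Longrightarrow> Cmp C f (Idt C A) = f"
  using cat unfolding category_def hom_def by blast

lemma comp_id_left: "hom C f A B \<Longrightarrow> Cmp C (Idt C B) f = f"
  using cat unfolding category_def hom_def by blast

lemma comp_assoc:
  "hom C f A B \<Longrightarrow> hom C g B D \<Longrightarrow> hom C h D E \<Longrightarrow> Cmp C h (Cmp C g f) = Cmp C (Cmp C h g) f"
  using cat unfolding category_def hom_def by metis

lemma pullback_eqI:
  assumes pb: "pullback C f g P p1 p2"
    and a: "hom C a W P" and b: "hom C b W P"
    and "Cmp C p1 a = Cmp C p1 b" "Cmp C p2 a = Cmp C p2 b"
  shows "a = b"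
proof -
  have p1: "hom C p1 P (Dom C f)" and p2: "hom C p2 P (Dom C g)" and sq: "Cmp C f p1 = Cmp C g p2"
    using pullback_homs[OF pb] by blast+
  have "hom C f (Dom C f) (Cod C f)" "hom C g (Dom C g) (Cod C f)"
    using pb unfolding pullback_def hom_def by simp_all
  then have "Cmp C f (Cmp C p1 a) = Cmp C g (Cmp C p2 a)"
    using comp_assoc[OF a p1] comp_assoc[OF a p2] sq by metis
  then have "\<exists>!u. hom C u W P \<and> Cmp C p1 u = Cmp C p1 a \<and> Cmp C p2 u = Cmp C p2 a"
    using pullback_unique_factor[OF pb comp_hom[OF a p1] comp_hom[OF a p2]] by blast
  then show ?thesis
    using a b assms(4,5) by metis
qed

lemma pullback_jointly_monic:
  assumes "pullback C f g P p1 p2"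
  shows "jointly_monic C p1 p2"
  unfolding jointly_monic_def
proof (intro conjI allI impI)
  have "hom C p1 P (Dom C f)" "hom C p2 P (Dom C g)"
    using pullback_homs[OF assms] by blast+
  then show "p1 \<in> Arr C" "p2 \<in> Arr C" "Dom C p1 = Dom C p2"
    by (simp_all add: hom_def)
  fix a b
  assume "a \<in> Arr C \<and> b \<in> Arr C \<and> Dom C a = Dom C b \<and> Cod C a = Dom C p1 \<and>
    Cod C b = Dom C p1 \<and> Cmp C p1 a = Cmp C p1 b \<and> Cmp C p2 a = Cmp C p2 b"
  with \<open>hom C p1 P (Dom C f)\<close> show "a = b"
    by (intro pullback_eqI[OF assms, of a "Dom C a" b]) (simp_all add: hom_def)
qed

lemma pullback_along_identity:
  assumes "hom C f X Y"
  shows "pullback C f (Idt C Y) X (Idt C X) f"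
proof -
  have "hom C (Idt C X) X X" "hom C (Idt C Y) Y Y"
    using assms hom_objs id_hom by blast+
  moreover have "Cmp C f (Idt C X) = Cmp C (Idt C Y) f"
    using assms comp_id_left comp_id_right by metis
  moreover have "\<exists>!u. hom C u Q X \<and> Cmp C (Idt C X) u = q1 \<and> Cmp C f u = q2"
    if "hom C q1 Q X" "Cmp C f q1 = Cmp C (Idt C Y) q2" "hom C q2 Q Y" for Q q1 q2
  proof (rule ex1I[of _ q1])
    show "hom C q1 Q X \<and> Cmp C (Idt C X) q1 = q1 \<and> Cmp C f q1 = q2"
      using that comp_id_left by simp
  qed (use comp_id_left in metis)
  ultimately show ?thesis
    using assms unfolding pullback_def by (simp add: hom_def)
qed

lemma Pt_arr_postcomp_squares:
  assumes \<pi>: "((fP, sP), (fA, sA), (p, q)) \<in> Arr (Pt C)"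
    and comp: "((fQ, sQ), (fA, sA), (Cmp C p u, Cmp C q v)) \<in> Arr (Pt C)"
    and u: "hom C u (Dom C fQ) (Dom C fP)" and v: "hom C v (Cod C fQ) (Cod C fP)"
  shows "Cmp C q (Cmp C fP u) = Cmp C q (Cmp C v fQ)"
    and "Cmp C p (Cmp C u sQ) = Cmp C p (Cmp C sP v)"
proof -
  have p: "hom C p (Dom C fP) (Dom C fA)" and q: "hom C q (Cod C fP) (Cod C fA)"
    and fP: "hom C fP (Dom C fP) (Cod C fP)" and sP: "hom C sP (Cod C fP) (Dom C fP)"
    and fA: "hom C fA (Dom C fA) (Cod C fA)" and sA: "hom C sA (Cod C fA) (Dom C fA)"
    and \<pi>_f: "Cmp C fA p = Cmp C q fP" and \<pi>_s: "Cmp C p sP = Cmp C sA q"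
    using \<pi> unfolding Pt_arr_iff split_epi_def hom_def by simp_all
  have fQ: "hom C fQ (Dom C fQ) (Cod C fQ)" and sQ: "hom C sQ (Cod C fQ) (Dom C fQ)"
    and comp_f: "Cmp C fA (Cmp C p u) = Cmp C (Cmp C q v) fQ"
    and comp_s: "Cmp C (Cmp C p u) sQ = Cmp C sA (Cmp C q v)"
    using comp unfolding Pt_arr_iff split_epi_def hom_def by simp_all
  have "Cmp C q (Cmp C fP u) = Cmp C (Cmp C fA p) u"
    using comp_assoc[OF u fP q] \<pi>_f by simp
  also have "\<dots> = Cmp C (Cmp C q v) fQ"
    using comp_assoc[OF u p fA] comp_f by simp
  also have "\<dots> = Cmp C q (Cmp C v fQ)"
    using comp_assoc[OF fQ v q] by simp
  finally show "Cmp C q (Cmp C fP u) = Cmp C q (Cmp C v fQ)" .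
  have "Cmp C p (Cmp C u sQ) = Cmp C sA (Cmp C q v)"
    using comp_assoc[OF sQ u p] comp_s by simp
  also have "\<dots> = Cmp C (Cmp C p sP) v"
    using comp_assoc[OF v q sA] \<pi>_s by simp
  also have "\<dots> = Cmp C p (Cmp C sP v)"
    using comp_assoc[OF v sP p] by simp
  finally show "Cmp C p (Cmp C u sQ) = Cmp C p (Cmp C sP v)" .
qed

lemma Pt_arr_of_jointly_monic_legs:
  assumes \<pi>1: "((fP, sP), (fA, sA), (p, q)) \<in> Arr (Pt C)"
    and \<pi>2: "((fP, sP), (fD, sD), (p', q')) \<in> Arr (Pt C)"
    and mono_p: "jointly_monic C p p'" and mono_q: "jointly_monic C q q'"
    and Q: "split_epi C (fQ, sQ)"
    and u: "hom C u (Dom C fQ) (Dom C fP)" and v: "hom C v (Cod C fQ) (Cod C fP)"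
    and comp1: "((fQ, sQ), (fA, sA), (Cmp C p u, Cmp C q v)) \<in> Arr (Pt C)"
    and comp2: "((fQ, sQ), (fD, sD), (Cmp C p' u, Cmp C q' v)) \<in> Arr (Pt C)"
  shows "((fQ, sQ), (fP, sP), (u, v)) \<in> Arr (Pt C)"
proof -
  have fP: "hom C fP (Dom C fP) (Cod C fP)" and sP: "hom C sP (Cod C fP) (Dom C fP)"
    and p: "Dom C p = Dom C fP" and q: "Dom C q = Cod C fP"
    using \<pi>1 unfolding Pt_arr_iff split_epi_def hom_def by simp_all
  have fQ: "hom C fQ (Dom C fQ) (Cod C fQ)" and sQ: "hom C sQ (Cod C fQ) (Dom C fQ)"
    using Q unfolding split_epi_def hom_def by simp_all
  have "Cmp C fP u = Cmp C v fQ"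
    using jointly_monicD[OF mono_q] comp_hom[OF u fP] comp_hom[OF fQ v]
      Pt_arr_postcomp_squares(1)[OF \<pi>1 comp1 u v] Pt_arr_postcomp_squares(1)[OF \<pi>2 comp2 u v]
    unfolding q by blast
  moreover have "Cmp C u sQ = Cmp C sP v"
    using jointly_monicD[OF mono_p] comp_hom[OF sQ u] comp_hom[OF v sP]
      Pt_arr_postcomp_squares(2)[OF \<pi>1 comp1 u v] Pt_arr_postcomp_squares(2)[OF \<pi>2 comp2 u v]
    unfolding p by blast
  ultimately show ?thesis
    using Q \<pi>1 u v unfolding Pt_arr_iff by simp
qed

lemma Pt_pullback_unique_factor:
  assumes \<alpha>: "((fA, sA), (fB, sB), (a, b)) \<in> Arr (Pt C)"
    and \<beta>: "((fD, sD), (fB, sB), (c, e)) \<in> Arr (Pt C)"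
    and \<pi>1: "((fP, sP), (fA, sA), (p, q)) \<in> Arr (Pt C)"
    and \<pi>2: "((fP, sP), (fD, sD), (p', q')) \<in> Arr (Pt C)"
    and top: "pullback C a c (Dom C fP) p p'"
    and bot: "pullback C b e (Cod C fP) q q'"
    and r1: "((fQ, sQ), (fA, sA), (x, y)) \<in> Arr (Pt C)"
    and r2: "((fQ, sQ), (fD, sD), (x', y')) \<in> Arr (Pt C)"
    and "Cmp C a x = Cmp C c x'" "Cmp C b y = Cmp C e y'"
  shows "\<exists>!w. hom (Pt C) w (fQ, sQ) (fP, sP) \<and>
           Cmp (Pt C) ((fP, sP), (fA, sA), (p, q)) w = ((fQ, sQ), (fA, sA), (x, y)) \<and>
           Cmp (Pt C) ((fP, sP), (fD, sD), (p', q')) w = ((fQ, sQ), (fD, sD), (x', y'))"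
    (is "\<exists>!w. ?factor w")
proof -
  have "hom C x (Dom C fQ) (Dom C a)" "hom C x' (Dom C fQ) (Dom C c)"
    and "hom C y (Cod C fQ) (Dom C b)" "hom C y' (Cod C fQ) (Dom C e)"
    using r1 r2 \<alpha> \<beta> unfolding Pt_arr_iff hom_def by simp_all
  with assms(9,10) obtain u v where
    u: "hom C u (Dom C fQ) (Dom C fP)" "Cmp C p u = x" "Cmp C p' u = x'" and
    v: "hom C v (Cod C fQ) (Cod C fP)" "Cmp C q v = y" "Cmp C q' v = y'"
    by (metis pullback_factor[OF top] pullback_factor[OF bot])
  have "split_epi C (fQ, sQ)"
    using r1 unfolding Pt_arr_iff by simp
  then have uv: "((fQ, sQ), (fP, sP), (u, v)) \<in> Arr (Pt C)"
    using Pt_arr_of_jointly_monic_legs[OF \<pi>1 \<pi>2 pullback_jointly_monic[OF top]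
        pullback_jointly_monic[OF bot] _ u(1) v(1)] r1 r2
    unfolding u(2,3) v(2,3) by blast
  show ?thesis
  proof (rule ex1I)
    show "?factor ((fQ, sQ), (fP, sP), (u, v))"
      using uv u v by (simp add: Pt_hom_iff Pt_comp)
    fix w
    assume w: "?factor w"
    then obtain u' v' where w_eq: "w = ((fQ, sQ), (fP, sP), (u', v'))"
      and "((fQ, sQ), (fP, sP), (u', v')) \<in> Arr (Pt C)"
      by (metis Pt_homE)
    then have "hom C u' (Dom C fQ) (Dom C fP)" "hom C v' (Cod C fQ) (Cod C fP)"
      unfolding Pt_arr_iff by simp_all
    moreover have "Cmp C p u' = x" "Cmp C p' u' = x'" "Cmp C q v' = y" "Cmp C q' v' = y'"
      using w by (simp_all add: w_eq Pt_comp)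
    ultimately have "u' = u" "v' = v"
      using pullback_eqI[OF top _ u(1)] pullback_eqI[OF bot _ v(1)] u v by simp_all
    then show "w = ((fQ, sQ), (fP, sP), (u, v))"
      using w_eq by simp
  qed
qed

lemma Pt_pullbackI:
  assumes \<alpha>: "((fA, sA), (fB, sB), (a, b)) \<in> Arr (Pt C)"
    and \<beta>: "((fD, sD), (fB, sB), (c, e)) \<in> Arr (Pt C)"
    and \<pi>1: "((fP, sP), (fA, sA), (p, q)) \<in> Arr (Pt C)"
    and \<pi>2: "((fP, sP), (fD, sD), (p', q')) \<in> Arr (Pt C)"
    and top: "pullback C a c (Dom C fP) p p'"
    and bot: "pullback C b e (Cod C fP) q q'"
  shows "pullback (Pt C) ((fA, sA), (fB, sB), (a, b)) ((fD, sD), (fB, sB), (c, e)) (fP, sP)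
           ((fP, sP), (fA, sA), (p, q)) ((fP, sP), (fD, sD), (p', q'))"
    (is "pullback _ ?\<alpha> ?\<beta> _ ?\<pi>1 ?\<pi>2")
proof -
  have univ: "\<exists>!w. hom (Pt C) w Q (fP, sP) \<and> Cmp (Pt C) ?\<pi>1 w = r1 \<and> Cmp (Pt C) ?\<pi>2 w = r2"
    if r1: "hom (Pt C) r1 Q (fA, sA)" and r2: "hom (Pt C) r2 Q (fD, sD)"
      and sq: "Cmp (Pt C) ?\<alpha> r1 = Cmp (Pt C) ?\<beta> r2" for Q r1 r2
  proof -
    obtain fQ sQ where Q: "Q = (fQ, sQ)" by fastforce
    obtain x y where r1_eq: "r1 = (Q, (fA, sA), (x, y))" and xy: "(Q, (fA, sA), (x, y)) \<in> Arr (Pt C)"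
      using r1 by (rule Pt_homE)
    obtain x' y' where r2_eq: "r2 = (Q, (fD, sD), (x', y'))"
      and xy': "(Q, (fD, sD), (x', y')) \<in> Arr (Pt C)"
      using r2 by (rule Pt_homE)
    have "Cmp C a x = Cmp C c x'" "Cmp C b y = Cmp C e y'"
      using sq by (simp_all add: r1_eq r2_eq Pt_comp)
    then show ?thesis
      unfolding r1_eq r2_eq Q by (rule Pt_pullback_unique_factor[OF assms xy[unfolded Q] xy'[unfolded Q]])
  qed
  have "Cmp C a p = Cmp C c p'" "Cmp C b q = Cmp C e q'"
    using pullback_homs[OF top] pullback_homs[OF bot] by blast+
  then have "Cmp (Pt C) ?\<alpha> ?\<pi>1 = Cmp (Pt C) ?\<beta> ?\<pi>2"
    by (simp add: Pt_comp)
  with \<alpha> \<beta> \<pi>1 \<pi>2 show ?thesis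
    unfolding pullback_def Pt_dom Pt_cod fst_conv snd_conv
    by (intro conjI allI impI; (simp add: Pt_hom_iff; fail)?) (elim conjE univ)
qed

lemma kernel_relation_exists:
  assumes "finitely_complete C" "f \<in> Arr C"
  obtains R d0 d1 s0 where "kernel_relation C f R d0 d1 s0"
proof -
  obtain R d0 d1 where pb: "pullback C f f R d0 d1"
    using assms unfolding finitely_complete_def by blast
  have "hom C (Idt C (Dom C f)) (Dom C f) (Dom C f)"
    using id_hom hom_objs homI[OF assms(2)] by blast
  then obtain s0 where "hom C s0 (Dom C f) R" "Cmp C d0 s0 = Idt C (Dom C f)" "Cmp C d1 s0 = Idt C (Dom C f)"
    using pullback_factor[OF pb] by metis
  with pb show ?thesis
    using that unfolding kernel_relation_def by blast
qed

lemma kernel_relation_map: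
  assumes R: "kernel_relation C f R d0 d1 s0" and K: "kernel_relation C h K k0 k1 t0"
    and f: "hom C f X Y" and h: "hom C h X' Y'"
    and x: "hom C x X X'" and y: "hom C y Y Y'" and sq: "Cmp C h x = Cmp C y f"
  obtains \<phi> where "hom C \<phi> R K" "Cmp C k0 \<phi> = Cmp C x d0" "Cmp C k1 \<phi> = Cmp C x d1"
proof -
  have d0: "hom C d0 R X" and d1: "hom C d1 R X" and kp: "Cmp C f d0 = Cmp C f d1"
    using kernel_relation_homs[OF R f] by blast+
  have "Cmp C h (Cmp C x d0) = Cmp C y (Cmp C f d0)"
    using comp_assoc[OF d0 x h] comp_assoc[OF d0 f y] sq by simp
  also have "\<dots> = Cmp C h (Cmp C x d1)"
    using comp_assoc[OF d1 x h] comp_assoc[OF d1 f y] sq kp by simp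
  finally show ?thesis
    using pullback_factor[OF kernel_relation_pullback[OF K]] h comp_hom[OF d0 x] comp_hom[OF d1 x] that
    unfolding hom_def by blast
qed

lemma kernel_relation_map_diagonal:
  assumes R: "kernel_relation C f R d0 d1 s0" and K: "kernel_relation C h K k0 k1 t0"
    and f: "hom C f X Y" and h: "hom C h X' Y'"
    and x: "hom C x X X'" and \<phi>: "hom C \<phi> R K"
    and \<phi>0: "Cmp C k0 \<phi> = Cmp C x d0" and \<phi>1: "Cmp C k1 \<phi> = Cmp C x d1"
  shows "Cmp C \<phi> s0 = Cmp C t0 x"
proof -
  have d0: "hom C d0 R X" and d1: "hom C d1 R X" and s0: "hom C s0 X R"
    and k0: "hom C k0 K X'" and k1: "hom C k1 K X'" and t0: "hom C t0 X' K"
    and "Cmp C d0 s0 = Idt C X" "Cmp C d1 s0 = Idt C X"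
    and "Cmp C k0 t0 = Idt C X'" "Cmp C k1 t0 = Idt C X'"
    using kernel_relation_homs[OF R f] kernel_relation_homs[OF K h] by blast+
  moreover have "Cmp C k (Cmp C \<phi> s0) = Cmp C k (Cmp C t0 x)"
    if k: "hom C k K X'" and d: "hom C d R X" and "Cmp C k \<phi> = Cmp C x d"
      and "Cmp C d s0 = Idt C X" and "Cmp C k t0 = Idt C X'" for k d
  proof -
    have "Cmp C k (Cmp C \<phi> s0) = Cmp C (Cmp C x d) s0"
      using comp_assoc[OF s0 \<phi> k] that(3) by simp
    also have "\<dots> = x"
      using comp_assoc[OF s0 d x] that(4) comp_id_right[OF x] by simp
    also have "\<dots> = Cmp C k (Cmp C t0 x)"
      using comp_assoc[OF x t0 k] that(5) comp_id_left[OF x] by simp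
    finally show ?thesis .
  qed
  ultimately show ?thesis
    using pullback_eqI[OF kernel_relation_pullback[OF K] comp_hom[OF s0 \<phi>] comp_hom[OF x t0]] \<phi>0 \<phi>1
    by blast
qed

context
  fixes f g X Y Z R d0 d1 s0 K k0 k1 t0 G e0 e1 u0 \<phi> \<psi>
  assumes f: "hom C f X Y" and g: "hom C g Y Z"
    and R: "kernel_relation C f R d0 d1 s0"
    and K: "kernel_relation C (Cmp C g f) K k0 k1 t0"
    and G: "kernel_relation C g G e0 e1 u0"
    and \<phi>: "hom C \<phi> R K" "Cmp C k0 \<phi> = d0" "Cmp C k1 \<phi> = d1"
    and \<psi>: "hom C \<psi> K G" "Cmp C e0 \<psi> = Cmp C f k0" "Cmp C e1 \<psi> = Cmp C f k1"
begin

lemma kernel_relation_comp_square: "Cmp C \<psi> \<phi> = Cmp C u0 (Cmp C f d0)"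
proof -
  have d0: "hom C d0 R X" and kp: "Cmp C f d0 = Cmp C f d1"
    using kernel_relation_homs[OF R f] by blast+
  have k0: "hom C k0 K X" and k1: "hom C k1 K X"
    using kernel_relation_homs[OF K comp_hom[OF f g]] by blast+
  have e0: "hom C e0 G Y" and e1: "hom C e1 G Y" and u0: "hom C u0 Y G"
    and "Cmp C e0 u0 = Idt C Y" "Cmp C e1 u0 = Idt C Y"
    using kernel_relation_homs[OF G g] by blast+
  have fd0: "hom C (Cmp C f d0) R Y"
    using comp_hom[OF d0 f] .
  have "Cmp C e (Cmp C \<psi> \<phi>) = Cmp C e (Cmp C u0 (Cmp C f d0))"
    if "hom C e G Y" "hom C k K X" "Cmp C e \<psi> = Cmp C f k" "Cmp C e u0 = Idt C Y"
      and "Cmp C f (Cmp C k \<phi>) = Cmp C f d0" for e k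
    using that comp_assoc[OF \<phi>(1) \<psi>(1) that(1)] comp_assoc[OF \<phi>(1) that(2) f]
      comp_assoc[OF fd0 u0 that(1)] comp_id_left[OF fd0] by metis
  then show ?thesis
    using pullback_eqI[OF kernel_relation_pullback[OF G] comp_hom[OF \<phi>(1) \<psi>(1)] comp_hom[OF fd0 u0]]
      e0 e1 k0 k1 \<psi> \<open>Cmp C e0 u0 = Idt C Y\<close> \<open>Cmp C e1 u0 = Idt C Y\<close> \<phi> kp by metis
qed

lemma kernel_relation_comp_unique_factor:
  assumes a: "hom C a W K" and b: "hom C b W Y" and ab: "Cmp C \<psi> a = Cmp C u0 b"
  shows "\<exists>!c. hom C c W R \<and> Cmp C \<phi> c = a \<and> Cmp C (Cmp C f d0) c = b"
proof -
  have d0: "hom C d0 R X"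
    using kernel_relation_homs[OF R f] by blast
  have k0: "hom C k0 K X" and k1: "hom C k1 K X"
    using kernel_relation_homs[OF K comp_hom[OF f g]] by blast+
  have u0: "hom C u0 Y G"
    using kernel_relation_homs[OF G g] by blast
  \<comment> \<open>Both legs of \<open>a\<close> are sent by \<open>f\<close> to \<open>b\<close>, because \<open>\<psi> a\<close> lies on the diagonal of \<open>R[g]\<close>.\<close>
  have leg: "Cmp C f (Cmp C k a) = b"
    if "hom C k K X" "hom C e G Y" "Cmp C e \<psi> = Cmp C f k" "Cmp C e u0 = Idt C Y" for k e
    using that ab comp_assoc[OF a that(1) f] comp_assoc[OF a \<psi>(1) that(2)]
      comp_assoc[OF b u0 that(2)] comp_id_left[OF b] by metis
  have f_legs: "Cmp C f (Cmp C k0 a) = b" "Cmp C f (Cmp C k1 a) = b"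
    using leg k0 k1 kernel_relation_homs[OF G g] \<psi> by blast+
  then obtain c where c: "hom C c W R" "Cmp C d0 c = Cmp C k0 a" "Cmp C d1 c = Cmp C k1 a"
    using pullback_factor[OF kernel_relation_pullback[OF R]] comp_hom[OF a k0] comp_hom[OF a k1] f
    unfolding hom_def by metis
  have c_unique: "c' = c" if "hom C c' W R" "Cmp C \<phi> c' = a" for c'
    using pullback_eqI[OF kernel_relation_pullback[OF R] that(1) c(1)] c that
      comp_assoc[OF that(1) \<phi>(1)] k0 k1 \<phi> by metis
  have "Cmp C \<phi> c = a"
    using pullback_eqI[OF kernel_relation_pullback[OF K] comp_hom[OF c(1) \<phi>(1)] a] c
      comp_assoc[OF c(1) \<phi>(1)] k0 k1 \<phi> by metis
  moreover have "Cmp C (Cmp C f d0) c = b"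
    using comp_assoc[OF c(1) d0 f] c(2) f_legs(1) by simp
  ultimately show ?thesis
    using c(1) c_unique by blast
qed

lemma kernel_relation_comp_pullback: "pullback C \<psi> u0 R \<phi> (Cmp C f d0)"
  using \<phi>(1) \<psi>(1) kernel_relation_homs[OF G g] comp_hom[OF kernel_relation_homs[OF R f, THEN conjunct1] f]
    kernel_relation_comp_square kernel_relation_comp_unique_factor
  unfolding pullback_def by (simp add: hom_def)

end

lemma split_epi_identity:
  assumes "Y \<in> Obj C"
  shows "split_epi C (Idt C Y, Idt C Y)"
  using id_hom[OF assms] comp_id_left[OF id_hom[OF assms]] unfolding split_epi_def hom_def by simp

lemma kernel_relation_comp_Pt_pullback:
  assumes f: "hom C f X Y" and g: "hom C g Y Z"
    and R: "kernel_relation C f R d0 d1 s0"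
    and K: "kernel_relation C (Cmp C g f) K k0 k1 t0"
    and G: "kernel_relation C g G e0 e1 u0"
  obtains \<phi> \<psi> where
    "pullback (Pt C) ((k0, t0), (e0, u0), (\<psi>, f)) ((Idt C Y, Idt C Y), (e0, u0), (u0, Idt C Y))
       (d0, s0) ((d0, s0), (k0, t0), (\<phi>, Idt C X)) ((d0, s0), (Idt C Y, Idt C Y), (Cmp C f d0, f))"
proof -
  have X: "hom C (Idt C X) X X" and Y: "hom C (Idt C Y) Y Y" and Z: "hom C (Idt C Z) Z Z"
    using f g hom_objs id_hom by blast+
  have gf: "hom C (Cmp C g f) X Z"
    using comp_hom[OF f g] .
  have d0: "hom C d0 R X" and d1: "hom C d1 R X" and s0: "hom C s0 X R"
    and d0s0: "Cmp C d0 s0 = Idt C X"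
    using kernel_relation_homs[OF R f] by blast+
  obtain \<phi> where \<phi>: "hom C \<phi> R K" "Cmp C k0 \<phi> = Cmp C (Idt C X) d0" "Cmp C k1 \<phi> = Cmp C (Idt C X) d1"
    using kernel_relation_map[OF R K f gf X g comp_id_right[OF gf]] .
  obtain \<psi> where \<psi>: "hom C \<psi> K G" "Cmp C e0 \<psi> = Cmp C f k0" "Cmp C e1 \<psi> = Cmp C f k1"
    using kernel_relation_map[OF K G gf g f Z comp_id_left[OF gf, symmetric]] .
  have \<phi>s0: "Cmp C \<phi> s0 = Cmp C t0 (Idt C X)"
    using kernel_relation_map_diagonal[OF R K f gf X \<phi>] .
  have \<psi>t0: "Cmp C \<psi> t0 = Cmp C u0 f"
    using kernel_relation_map_diagonal[OF K G gf g f \<psi>] .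
  have k0: "hom C k0 K X" and t0: "hom C t0 X K" and e0: "hom C e0 G Y" and u0: "hom C u0 Y G"
    and "Cmp C e0 u0 = Idt C Y"
    using kernel_relation_homs[OF K gf] kernel_relation_homs[OF G g] by blast+
  moreover have "split_epi C (Idt C Y, Idt C Y)"
    using split_epi_identity hom_objs[OF f] by blast
  moreover note kernel_relation_split_epi[OF R] kernel_relation_split_epi[OF K]
    kernel_relation_split_epi[OF G] comp_id_left[OF d0] comp_id_right[OF t0] comp_id_left[OF Y]
    comp_id_right[OF u0] comp_id_left[OF f] comp_id_right[OF f] comp_id_left[OF comp_hom[OF d0 f]]
    comp_assoc[OF s0 d0 f] d0s0
  ultimately have
    "((k0, t0), (e0, u0), (\<psi>, f)) \<in> Arr (Pt C)"
    "((Idt C Y, Idt C Y), (e0, u0), (u0, Idt C Y)) \<in> Arr (Pt C)"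
    "((d0, s0), (k0, t0), (\<phi>, Idt C X)) \<in> Arr (Pt C)"
    "((d0, s0), (Idt C Y, Idt C Y), (Cmp C f d0, f)) \<in> Arr (Pt C)"
    using \<phi> \<psi> \<phi>s0 \<psi>t0 f X Y d0 comp_hom[OF d0 f] unfolding Pt_arr_iff by (auto simp: hom_def)
  moreover have "pullback C \<psi> u0 (Dom C d0) \<phi> (Cmp C f d0)"
    using kernel_relation_comp_pullback[OF f g R K G] \<phi> \<psi> d0 comp_id_left[OF d0] comp_id_left[OF d1]
    by (simp add: hom_def)
  moreover have "pullback C f (Idt C Y) (Cod C d0) (Idt C X) f"
    using pullback_along_identity[OF f] d0 by (simp add: hom_def)
  ultimately show ?thesis
    by (rule that[OF Pt_pullbackI])
qed

lemma sigma_special_iff: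
  "sigma_special C S f \<longleftrightarrow>
     f \<in> Arr C \<and> (\<forall>R d0 d1 s0. kernel_relation C f R d0 d1 s0 \<longrightarrow> (d0, s0) \<in> S)"
proof -
  have "sigma_relation C S (Dom C f) R d0 d1 s0 \<longleftrightarrow> (d0, s0) \<in> S"
    if "kernel_relation C f R d0 d1 s0" for R d0 d1 s0
    using that pullback_jointly_monic unfolding sigma_relation_def kernel_relation_def pullback_def
    by blast
  then show ?thesis
    unfolding sigma_special_def kernel_relation_def[symmetric] by blast
qed

lemma fibrational_identity_point:
  assumes "fibrational C S" "Y \<in> Obj C"
  shows "(Idt C Y, Idt C Y) \<in> S"
proof -
  have "hom C (Idt C Y) Y Y" "Cmp C (Idt C Y) (Idt C Y) = Idt C Y"
    using id_hom[OF assms(2)] comp_id_left[OF id_hom[OF assms(2)]] by simp_all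
  then have "iso C (Idt C Y)"
    unfolding iso_def by (simp add: hom_def) blast
  with assms show ?thesis
    using split_epi_identity unfolding fibrational_def by blast
qed

end

theorem proposition6p4:
  fixes C :: "('o,'m) cat" and S :: "('m \<times> 'm) set"
    and f g :: 'm and X Y Z :: 'o
  assumes "finitely_complete C"
    and "point_congruous C S"
    and "sigma_maltsev C S"
    and "hom C f X Y"
    and "hom C g Y Z"
    and "sigma_special C S (Cmp C g f)"
    and "sigma_special C S g"
  shows "sigma_special C S f"
proof -
  have cat: "category C"
    using assms(1) unfolding finitely_complete_def by blast
  obtain K k0 k1 t0 where K: "kernel_relation C (Cmp C g f) K k0 k1 t0"
    using kernel_relation_exists[OF cat assms(1)] assms(6) unfolding sigma_special_iff[OF cat] by blast
  obtain G e0 e1 u0 where G: "kernel_relation C g G e0 e1 u0"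
    using kernel_relation_exists[OF cat assms(1)] assms(7) unfolding sigma_special_iff[OF cat] by blast
  have "(k0, t0) \<in> S" "(e0, u0) \<in> S"
    using assms(6,7) K G unfolding sigma_special_iff[OF cat] by blast+
  moreover have "(Idt C Y, Idt C Y) \<in> S"
    using fibrational_identity_point[OF cat] assms(2,4) hom_objs[OF cat] unfolding point_congruous_def
    by blast
  moreover have "pullback (Pt C) \<alpha> \<beta> P \<pi>1 \<pi>2 \<Longrightarrow> Dom (Pt C) \<alpha> \<in> S \<Longrightarrow> Dom (Pt C) \<beta> \<in> S \<Longrightarrow>
      Cod (Pt C) \<alpha> \<in> S \<Longrightarrow> P \<in> S" for \<alpha> \<beta> P \<pi>1 \<pi>2
    using assms(2) unfolding point_congruous_def by blast
  ultimately have "(d0, s0) \<in> S" if "kernel_relation C f R d0 d1 s0" for R d0 d1 s0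
    using kernel_relation_comp_Pt_pullback[OF cat assms(4,5) that K G] by (metis Pt_dom Pt_cod fst_conv snd_conv)
  then show ?thesis
    using assms(4) unfolding sigma_special_iff[OF cat] hom_def by blast
qed

end
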